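(* For $\sigma>0$ let $\mathcal H_\sigma$ denote the reproducing kernel Hilbert space of the Gaussian kernel $k_\sigma(x,y) = \exp(-\|x-y\|^2/(2\sigma^2))$ on $\mathbb R^d$, with norm $\|\cdot\|_\sigma$. If $f, g \in \mathcal H_\sigma$, then the pointwise product $fg$ satisfies $\|fg\|_{\sigma/\sqrt2} \leq \|f\|_\sigma \|g\|_\sigma$. *)

theory Defs
  imports "HOL-Analysis.Analysis"
begin

text \<open>Gaussian kernel on R^d (index type 'd, d = CARD('d)).\<close>
definition gauss_kernel :: "real \<Rightarrow> real^'d \<Rightarrow> real^'d \<Rightarrow> real" where
  "gauss_kernel \<sigma> x y = exp (- (norm (x - y))\<^sup>2 / (2 * \<sigma>\<^sup>2))"

text \<open>RKHS of a (real, positive definite) kernel k via the Moore--Aronszajn construction.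
  Pre-Hilbert space H0 = span of kernel sections; an element of H0 is given by a finite
  list of (coefficient, centre) pairs.\<close>
definition kfun :: "('a \<Rightarrow> 'a \<Rightarrow> real) \<Rightarrow> (real \<times> 'a) list \<Rightarrow> 'a \<Rightarrow> real" where
  "kfun k xs = (\<lambda>z. \<Sum>(a,x)\<leftarrow>xs. a * k z x)"

definition pre_norm2 :: "('a \<Rightarrow> 'a \<Rightarrow> real) \<Rightarrow> (real \<times> 'a) list \<Rightarrow> real" where
  "pre_norm2 k xs = (\<Sum>(a,x)\<leftarrow>xs. \<Sum>(b,y)\<leftarrow>xs. a * b * k x y)"

definition comb_diff :: "(real \<times> 'a) list \<Rightarrow> (real \<times> 'a) list \<Rightarrow> (real \<times> 'a) list" where
  "comb_diff xs ys = xs @ map (\<lambda>(a,x). (- a, x)) ys"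

definition H0_cauchy :: "('a \<Rightarrow> 'a \<Rightarrow> real) \<Rightarrow> (nat \<Rightarrow> (real \<times> 'a) list) \<Rightarrow> bool" where
  "H0_cauchy k F \<longleftrightarrow> (\<forall>e>0. \<exists>N. \<forall>m\<ge>N. \<forall>n\<ge>N. pre_norm2 k (comb_diff (F m) (F n)) < e)"

definition in_rkhs :: "('a \<Rightarrow> 'a \<Rightarrow> real) \<Rightarrow> ('a \<Rightarrow> real) \<Rightarrow> bool" where
  "in_rkhs k f \<longleftrightarrow> (\<exists>F. H0_cauchy k F \<and> (\<forall>z. (\<lambda>n. kfun k (F n) z) \<longlonglongrightarrow> f z))"

text \<open>Its norm is the limit of the H0 norms of any such sequence (independent of the
  sequence for a positive definite kernel; we take the infimum over all of them).\<close>
definition rkhs_norm :: "('a \<Rightarrow> 'a \<Rightarrow> real) \<Rightarrow> ('a \<Rightarrow> real) \<Rightarrow> real" where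
  "rkhs_norm k f = Inf {L. \<exists>F. H0_cauchy k F \<and> (\<forall>z. (\<lambda>n. kfun k (F n) z) \<longlonglongrightarrow> f z)
                              \<and> (\<lambda>n. sqrt (pre_norm2 k (F n))) \<longlonglongrightarrow> L}"

end

theory Submission
  imports Defs
begin

(* For kernel sections, k_s(z,x) k_s(z,y) = w(x,y) k_{s/sqrt 2}(z, (x+y)/2) with
   w(x,y) = exp(-|x-y|^2/(4 s^2)).  Hence the product of two finite combinations F, G of
   k_s-sections is the finite combination of k_{s/sqrt 2}-sections obtained by collapsing the
   tensor product F (x) G onto the diagonal.  Collapsing does not increase the norm, because
   (k_s (x) k_s) minus the collapsed kernel is the collapsed kernel times
   exp(<x-y, x'-y'>/(2 s^2)) - 1, a power series with nonnegative coefficients in a feature kernel,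
   hence positive semidefinite; and ||F (x) G|| = ||F|| ||G||.  Applied to Cauchy sequences
   approximating f and g this gives an approximating sequence for fg whose norms converge to at
   most the product of the limits, and taking infima gives the bound. *)

section \<open>Positive semidefinite kernels\<close>

definition gram_form :: "('a \<Rightarrow> 'a \<Rightarrow> real) \<Rightarrow> nat \<Rightarrow> (nat \<Rightarrow> real) \<Rightarrow> (nat \<Rightarrow> 'a) \<Rightarrow> real" where
  "gram_form K n a x = (\<Sum>i<n. \<Sum>j<n. a i * a j * K (x i) (x j))"

definition psd_kernel :: "('a \<Rightarrow> 'a \<Rightarrow> real) \<Rightarrow> bool" where
  "psd_kernel K \<longleftrightarrow> (\<forall>n a x. 0 \<le> gram_form K n a x)"

definition feature_kernel :: "'t set \<Rightarrow> ('t \<Rightarrow> 'a \<Rightarrow> real) \<Rightarrow> 'a \<Rightarrow> 'a \<Rightarrow> real" where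
  "feature_kernel T \<phi> x y = (\<Sum>t\<in>T. \<phi> t x * \<phi> t y)"

lemma pre_norm2_eq_gram_form:
  "pre_norm2 K xs = gram_form K (length xs) (\<lambda>i. fst (xs ! i)) (\<lambda>i. snd (xs ! i))"
  unfolding pre_norm2_def gram_form_def
  by (simp add: sum_list_sum_nth atLeast0LessThan case_prod_beta)

lemma psd_kernel_pre_norm2_nonneg: "psd_kernel K \<Longrightarrow> 0 \<le> pre_norm2 K xs"
  unfolding psd_kernel_def pre_norm2_eq_gram_form by blast

lemma psd_kernel_const_one: "psd_kernel (\<lambda>x y. 1)"
  unfolding psd_kernel_def gram_form_def
  by (simp flip: sum_product)

lemma psd_kernel_scale:
  assumes "0 \<le> c" "psd_kernel K"
  shows "psd_kernel (\<lambda>x y. c * K x y)"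
proof -
  have "gram_form (\<lambda>x y. c * K x y) n a x = c * gram_form K n a x" for n a x
    unfolding gram_form_def by (simp add: sum_distrib_left algebra_simps)
  then show ?thesis
    using assms unfolding psd_kernel_def by simp
qed

lemma psd_kernel_rescale:
  assumes "psd_kernel K"
  shows "psd_kernel (\<lambda>x y. h x * h y * K x y)"
proof -
  have "gram_form (\<lambda>x y. h x * h y * K x y) n a x = gram_form K n (\<lambda>i. a i * h (x i)) x"
    for n a x
    unfolding gram_form_def by (simp add: algebra_simps)
  then show ?thesis
    using assms unfolding psd_kernel_def by simp
qed

lemma psd_kernel_comp:
  assumes "psd_kernel K"
  shows "psd_kernel (\<lambda>s t. K (m s) (m t))"
proof -
  have "gram_form (\<lambda>s t. K (m s) (m t)) n a x = gram_form K n a (m \<circ> x)" for n a x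
    unfolding gram_form_def by simp
  then show ?thesis
    using assms unfolding psd_kernel_def by simp
qed

lemma psd_kernel_sum:
  assumes "finite S" "\<And>s. s \<in> S \<Longrightarrow> psd_kernel (K s)"
  shows "psd_kernel (\<lambda>x y. \<Sum>s\<in>S. K s x y)"
proof -
  have "gram_form (\<lambda>x y. \<Sum>s\<in>S. K s x y) n a x = (\<Sum>s\<in>S. gram_form (K s) n a x)" for n a x
    unfolding gram_form_def by (simp add: sum_distrib_left sum.swap[of _ S])
  then show ?thesis
    using assms unfolding psd_kernel_def by (simp add: sum_nonneg)
qed

lemma psd_kernel_mult_feature_kernel:
  assumes "psd_kernel K" "finite T"
  shows "psd_kernel (\<lambda>x y. K x y * feature_kernel T \<phi> x y)"
proof -
  have "gram_form (\<lambda>x y. K x y * feature_kernel T \<phi> x y) n a x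
      = (\<Sum>t\<in>T. gram_form K n (\<lambda>i. a i * \<phi> t (x i)) x)" for n a x
    unfolding gram_form_def feature_kernel_def
    by (simp add: sum_distrib_left sum.swap[of _ T] algebra_simps)
  then show ?thesis
    using assms unfolding psd_kernel_def by (simp add: sum_nonneg)
qed

lemma psd_kernel_mult_feature_kernel_power:
  assumes "psd_kernel K" "finite T"
  shows "psd_kernel (\<lambda>x y. K x y * feature_kernel T \<phi> x y ^ j)"
proof (induction j)
  case 0
  then show ?case using assms(1) by simp
next
  case (Suc j)
  then show ?case
    using psd_kernel_mult_feature_kernel[OF Suc assms(2), of \<phi>] by (simp add: ac_simps)
qed

lemma psd_kernel_limit:
  assumes "\<And>N. psd_kernel (K N)" "\<And>x y. (\<lambda>N. K N x y) \<longlonglongrightarrow> L x y"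
  shows "psd_kernel L"
  unfolding psd_kernel_def
proof (intro allI)
  fix n a x
  have "(\<lambda>N. gram_form (K N) n a x) \<longlonglongrightarrow> gram_form L n a x"
    unfolding gram_form_def by (intro tendsto_intros assms)
  then show "0 \<le> gram_form L n a x"
    using assms(1) unfolding psd_kernel_def by (intro LIMSEQ_le_const) auto
qed

lemma psd_kernel_mult_feature_series:
  assumes "psd_kernel K" "finite T" "\<And>j. 0 \<le> c j"
    and "\<And>x y. (\<lambda>j. c j * feature_kernel T \<phi> x y ^ j) sums s x y"
  shows "psd_kernel (\<lambda>x y. K x y * s x y)"
proof (rule psd_kernel_limit)
  show "psd_kernel (\<lambda>x y. \<Sum>j<N. c j * (K x y * feature_kernel T \<phi> x y ^ j))" for N
    using assms(1-3)
    by (intro psd_kernel_sum psd_kernel_scale psd_kernel_mult_feature_kernel_power) auto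
  show "(\<lambda>N. \<Sum>j<N. c j * (K x y * feature_kernel T \<phi> x y ^ j)) \<longlonglongrightarrow> K x y * s x y" for x y
    using sums_mult[OF assms(4), of "K x y"]
    by (simp add: sums_def sum_distrib_left ac_simps)
qed

lemma psd_kernel_mult_exp_feature_kernel:
  assumes "psd_kernel K" "finite T"
  shows "psd_kernel (\<lambda>x y. K x y * exp (feature_kernel T \<phi> x y))"
proof (rule psd_kernel_mult_feature_series[OF assms, of "\<lambda>j. 1 / fact j"])
  show "(\<lambda>j. 1 / fact j * feature_kernel T \<phi> x y ^ j) sums exp (feature_kernel T \<phi> x y)" for x y
    using exp_converges[of "feature_kernel T \<phi> x y"] by (simp add: divide_inverse ac_simps)
qed simp

lemma psd_kernel_mult_exp_feature_kernel_minus_one: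
  assumes "psd_kernel K" "finite T"
  shows "psd_kernel (\<lambda>x y. K x y * (exp (feature_kernel T \<phi> x y) - 1))"
proof (rule psd_kernel_mult_feature_series[OF assms, of "\<lambda>j. if j = 0 then 0 else 1 / fact j"])
  fix x y
  let ?z = "feature_kernel T \<phi> x y"
  have "(\<lambda>j. ?z ^ j /\<^sub>R fact j - (if j = 0 then 1 else 0)) sums (exp ?z - 1)"
    using sums_diff[OF exp_converges sums_single[of 0 "\<lambda>_. 1 :: real"]] by simp
  then show "(\<lambda>j. (if j = 0 then 0 else 1 / fact j) * ?z ^ j) sums (exp ?z - 1)"
    by (rule sums_cong[THEN iffD1, rotated]) (simp add: divide_inverse)
qed simp

section \<open>The pre-Hilbert space of kernel combinations\<close>

definition pre_inner :: "('a \<Rightarrow> 'a \<Rightarrow> real) \<Rightarrow> (real \<times> 'a) list \<Rightarrow> (real \<times> 'a) list \<Rightarrow> real" where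
  "pre_inner K xs ys = (\<Sum>(a,x)\<leftarrow>xs. \<Sum>(b,y)\<leftarrow>ys. a * b * K x y)"

definition scale_comb :: "real \<Rightarrow> (real \<times> 'a) list \<Rightarrow> (real \<times> 'a) list" where
  "scale_comb c xs = map (\<lambda>(a,x). (c * a, x)) xs"

lemma pre_norm2_eq_pre_inner: "pre_norm2 K xs = pre_inner K xs xs"
  by (simp add: pre_norm2_def pre_inner_def)

lemma pre_norm2_kernel_diff:
  "pre_norm2 (\<lambda>x y. K x y - L x y) xs = pre_norm2 K xs - pre_norm2 L xs"
  by (simp add: pre_norm2_def case_prod_unfold right_diff_distrib sum_list_subtractf)

lemma comb_diff_eq_append_scale_comb: "comb_diff xs ys = xs @ scale_comb (-1) ys"
  by (simp add: comb_diff_def scale_comb_def case_prod_beta)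

lemma pre_inner_append_left: "pre_inner K (xs @ ys) zs = pre_inner K xs zs + pre_inner K ys zs"
  by (simp add: pre_inner_def)

lemma pre_inner_append_right: "pre_inner K zs (xs @ ys) = pre_inner K zs xs + pre_inner K zs ys"
  by (simp add: pre_inner_def case_prod_unfold sum_list_addf)

lemma pre_inner_scale_comb_left: "pre_inner K (scale_comb c xs) ys = c * pre_inner K xs ys"
  by (simp add: pre_inner_def scale_comb_def case_prod_unfold comp_def algebra_simps
      flip: sum_list_const_mult)

lemma pre_inner_scale_comb_right: "pre_inner K xs (scale_comb c ys) = c * pre_inner K xs ys"
  by (simp add: pre_inner_def scale_comb_def case_prod_unfold comp_def algebra_simps
      flip: sum_list_const_mult)

lemma pre_inner_comb_diff_left:
  "pre_inner K (comb_diff xs ys) zs = pre_inner K xs zs - pre_inner K ys zs"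
  by (simp add: comb_diff_eq_append_scale_comb pre_inner_append_left pre_inner_scale_comb_left)

lemma pre_inner_comb_diff_right:
  "pre_inner K zs (comb_diff xs ys) = pre_inner K zs xs - pre_inner K zs ys"
  by (simp add: comb_diff_eq_append_scale_comb pre_inner_append_right pre_inner_scale_comb_right)

lemma sum_list_swap:
  "(\<Sum>x\<leftarrow>xs. \<Sum>y\<leftarrow>ys. f x y) = (\<Sum>y\<leftarrow>ys. \<Sum>x\<leftarrow>xs. f x y :: 'c :: comm_monoid_add)"
  by (induction xs) (simp_all add: sum_list_addf)

lemma pre_inner_commute:
  assumes "\<And>x y. K x y = K y x"
  shows "pre_inner K xs ys = pre_inner K ys xs"
  unfolding pre_inner_def case_prod_unfold by (subst sum_list_swap) (simp add: assms ac_simps)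

lemma pre_norm2_append:
  assumes "\<And>x y. K x y = K y x"
  shows "pre_norm2 K (xs @ ys) = pre_norm2 K xs + 2 * pre_inner K xs ys + pre_norm2 K ys"
  using pre_inner_commute[of K ys xs] assms
  by (simp add: pre_norm2_eq_pre_inner pre_inner_append_left pre_inner_append_right)

lemma pre_norm2_comb_diff:
  assumes "\<And>x y. K x y = K y x"
  shows "pre_norm2 K (comb_diff xs ys) = pre_norm2 K xs - 2 * pre_inner K xs ys + pre_norm2 K ys"
  using pre_inner_commute[of K ys xs] assms
  by (simp add: pre_norm2_eq_pre_inner pre_inner_comb_diff_left pre_inner_comb_diff_right)

lemma nonneg_quadratic_imp_discriminant_le:
  fixes a b c :: real
  assumes "\<And>t. 0 \<le> a + 2 * b * t + c * t\<^sup>2" "0 \<le> c"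
  shows "b\<^sup>2 \<le> a * c"
proof (cases "c = 0")
  case True
  show ?thesis
  proof (rule ccontr)
    assume "\<not> ?thesis"
    then have "b \<noteq> 0" using True by auto
    have "0 \<le> a + 2 * b * (- (a + 1) / (2 * b))"
      using assms(1)[of "- (a + 1) / (2 * b)"] True by simp
    also have "\<dots> = -1" using \<open>b \<noteq> 0\<close> by (simp add: field_simps)
    finally show False by simp
  qed
next
  case False
  then have "0 < c" using assms(2) by simp
  have "0 \<le> a + 2 * b * (- b / c) + c * (- b / c)\<^sup>2" by (fact assms(1))
  also have "\<dots> = (a * c - b\<^sup>2) / c" using \<open>0 < c\<close> by (simp add: field_simps power2_eq_square)
  finally show ?thesis using \<open>0 < c\<close> by (simp add: zero_le_divide_iff)
qed

lemma pre_inner_Cauchy_Schwarz: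
  assumes "psd_kernel K" "\<And>x y. K x y = K y x"
  shows "(pre_inner K xs ys)\<^sup>2 \<le> pre_norm2 K xs * pre_norm2 K ys"
proof (rule nonneg_quadratic_imp_discriminant_le)
  show "0 \<le> pre_norm2 K xs + 2 * pre_inner K xs ys * t + pre_norm2 K ys * t\<^sup>2" for t
    using psd_kernel_pre_norm2_nonneg[OF assms(1), of "xs @ scale_comb t ys"]
    unfolding pre_norm2_append[OF assms(2)]
    by (simp add: pre_norm2_eq_pre_inner pre_inner_scale_comb_left pre_inner_scale_comb_right
        power2_eq_square ac_simps)
  show "0 \<le> pre_norm2 K ys" by (rule psd_kernel_pre_norm2_nonneg[OF assms(1)])
qed

lemma abs_pre_inner_le:
  assumes "psd_kernel K" "\<And>x y. K x y = K y x"
  shows "\<bar>pre_inner K xs ys\<bar> \<le> sqrt (pre_norm2 K xs) * sqrt (pre_norm2 K ys)"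
  using pre_inner_Cauchy_Schwarz[OF assms] by (metis real_sqrt_abs real_sqrt_le_mono real_sqrt_mult)

lemma sqrt_pre_norm2_append_le:
  assumes "\<And>x y. K x y = K y x" "0 \<le> pre_norm2 K xs" "0 \<le> pre_norm2 K ys"
    and "\<bar>pre_inner K xs ys\<bar> \<le> sqrt (pre_norm2 K xs) * sqrt (pre_norm2 K ys)"
  shows "sqrt (pre_norm2 K (xs @ ys)) \<le> sqrt (pre_norm2 K xs) + sqrt (pre_norm2 K ys)"
proof -
  have "pre_norm2 K (xs @ ys) \<le> (sqrt (pre_norm2 K xs) + sqrt (pre_norm2 K ys))\<^sup>2"
    using assms by (simp add: pre_norm2_append power2_sum)
  then show ?thesis
    using assms(2,3) by (simp add: real_le_lsqrt)
qed

lemma sqrt_pre_norm2_diff_ge: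
  assumes "psd_kernel K" "\<And>x y. K x y = K y x"
  shows "\<bar>sqrt (pre_norm2 K xs) - sqrt (pre_norm2 K ys)\<bar> \<le> sqrt (pre_norm2 K (comb_diff xs ys))"
proof -
  have "(sqrt (pre_norm2 K xs) - sqrt (pre_norm2 K ys))\<^sup>2 \<le> pre_norm2 K (comb_diff xs ys)"
    using abs_pre_inner_le[OF assms, of xs ys] psd_kernel_pre_norm2_nonneg[OF assms(1)]
    by (simp add: pre_norm2_comb_diff[OF assms(2)] power2_diff)
  then show ?thesis
    by (metis real_sqrt_abs real_sqrt_le_mono)
qed

lemma H0_cauchy_iff_sqrt:
  "H0_cauchy K F \<longleftrightarrow>
    (\<forall>e>0. \<exists>N. \<forall>m\<ge>N. \<forall>n\<ge>N. sqrt (pre_norm2 K (comb_diff (F m) (F n))) < e)"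
proof -
  have "(\<forall>e>0. \<exists>N. \<forall>m\<ge>N. \<forall>n\<ge>N. P m n < e) \<longleftrightarrow>
      (\<forall>e>0. \<exists>N. \<forall>m\<ge>N. \<forall>n\<ge>N. sqrt (P m n) < e)" for P :: "nat \<Rightarrow> nat \<Rightarrow> real"
  proof (intro iffI allI impI)
    fix e :: real
    assume "\<forall>e>0. \<exists>N. \<forall>m\<ge>N. \<forall>n\<ge>N. P m n < e" "0 < e"
    then obtain N where "\<forall>m\<ge>N. \<forall>n\<ge>N. sqrt (P m n) < sqrt (e\<^sup>2)"
      by (metis real_sqrt_less_iff zero_less_power)
    then show "\<exists>N. \<forall>m\<ge>N. \<forall>n\<ge>N. sqrt (P m n) < e"
      using \<open>0 < e\<close> by auto
  next
    fix e :: real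
    assume "\<forall>e>0. \<exists>N. \<forall>m\<ge>N. \<forall>n\<ge>N. sqrt (P m n) < e" "0 < e"
    then obtain N where "\<forall>m\<ge>N. \<forall>n\<ge>N. sqrt (P m n) < sqrt e"
      by (meson real_sqrt_gt_zero)
    then show "\<exists>N. \<forall>m\<ge>N. \<forall>n\<ge>N. P m n < e"
      by auto
  qed
  then show ?thesis
    unfolding H0_cauchy_def .
qed

lemma H0_cauchy_norm_convergent:
  assumes "psd_kernel K" "\<And>x y. K x y = K y x" "H0_cauchy K F"
  shows "convergent (\<lambda>n. sqrt (pre_norm2 K (F n)))"
proof -
  have "Cauchy (\<lambda>n. sqrt (pre_norm2 K (F n)))"
  proof (rule metric_CauchyI)
    fix e :: real
    assume "0 < e"
    then obtain N where "\<forall>m\<ge>N. \<forall>n\<ge>N. sqrt (pre_norm2 K (comb_diff (F m) (F n))) < e"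
      using assms(3) unfolding H0_cauchy_iff_sqrt by blast
    then show "\<exists>N. \<forall>m\<ge>N. \<forall>n\<ge>N. dist (sqrt (pre_norm2 K (F m))) (sqrt (pre_norm2 K (F n))) < e"
      using sqrt_pre_norm2_diff_ge[OF assms(1,2)] unfolding dist_real_def
      by (meson order.strict_trans1)
  qed
  then show ?thesis
    by (simp add: Cauchy_convergent_iff)
qed

lemma H0_cauchy_norm_bounded:
  assumes "psd_kernel K" "\<And>x y. K x y = K y x" "H0_cauchy K F"
  obtains M where "0 < M" "\<And>n. sqrt (pre_norm2 K (F n)) \<le> M"
  using convergent_imp_Bseq[OF H0_cauchy_norm_convergent[OF assms]]
  unfolding Bseq_def by (metis abs_ge_self order.trans real_norm_def)

section \<open>Tensor products of combinations\<close>

definition tensor_comb :: "(real \<times> 'a) list \<Rightarrow> (real \<times> 'b) list \<Rightarrow> (real \<times> ('a \<times> 'b)) list" where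
  "tensor_comb F G = concat (map (\<lambda>(a,x). map (\<lambda>(b,y). (a * b, (x, y))) G) F)"

definition tensor_kernel :: "('a \<Rightarrow> 'a \<Rightarrow> real) \<Rightarrow> ('a \<times> 'a) \<Rightarrow> ('a \<times> 'a) \<Rightarrow> real" where
  "tensor_kernel K s t = K (fst s) (fst t) * K (snd s) (snd t)"

lemma sum_list_tensor_comb:
  "(\<Sum>p\<leftarrow>tensor_comb F G. h p) = (\<Sum>(a,x)\<leftarrow>F. \<Sum>(b,y)\<leftarrow>G. h (a * b, (x, y)))"
  by (induction F) (auto simp: tensor_comb_def case_prod_unfold comp_def)

lemma kfun_tensor_comb:
  "kfun (tensor_kernel K) (tensor_comb F G) (z, w) = kfun K F z * kfun K G w"
  unfolding kfun_def sum_list_tensor_comb tensor_kernel_def case_prod_unfold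
  by (simp only: fst_conv snd_conv flip: sum_list_mult_const)
    (simp add: ac_simps flip: sum_list_const_mult)

lemma pre_inner_tensor_comb:
  "pre_inner (tensor_kernel K) (tensor_comb F G) (tensor_comb F' G')
    = pre_inner K F F' * pre_inner K G G'"
proof -
  have "pre_inner (tensor_kernel K) (tensor_comb F G) (tensor_comb F' G') =
      (\<Sum>(a,x)\<leftarrow>F. \<Sum>(b,y)\<leftarrow>G. \<Sum>(a',x')\<leftarrow>F'. \<Sum>(b',y')\<leftarrow>G'.
        (a * a' * K x x') * (b * b' * K y y'))"
    by (simp add: pre_inner_def sum_list_tensor_comb tensor_kernel_def case_prod_unfold ac_simps)
  also have "\<dots> = (\<Sum>(a,x)\<leftarrow>F. \<Sum>(a',x')\<leftarrow>F'. \<Sum>(b,y)\<leftarrow>G. \<Sum>(b',y')\<leftarrow>G'.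
        (a * a' * K x x') * (b * b' * K y y'))"
    by (simp add: case_prod_unfold sum_list_swap[where xs = G])
  also have "\<dots> = pre_inner K F F' * pre_inner K G G'"
    unfolding pre_inner_def case_prod_unfold
    by (simp only: flip: sum_list_mult_const) (simp only: flip: sum_list_const_mult)
  finally show ?thesis .
qed

lemma tensor_kernel_commute:
  assumes "\<And>x y. K x y = K y x"
  shows "tensor_kernel K s t = tensor_kernel K t s"
  by (simp add: tensor_kernel_def assms)

lemma pre_norm2_tensor_comb:
  "pre_norm2 (tensor_kernel K) (tensor_comb F G) = pre_norm2 K F * pre_norm2 K G"
  by (simp add: pre_norm2_eq_pre_inner pre_inner_tensor_comb)

lemma sqrt_pre_norm2_tensor_comb_diff_le:
  assumes "psd_kernel K" "\<And>x y. K x y = K y x"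
  shows "sqrt (pre_norm2 (tensor_kernel K) (comb_diff (tensor_comb F G) (tensor_comb F' G')))
    \<le> sqrt (pre_norm2 K F) * sqrt (pre_norm2 K (comb_diff G G'))
      + sqrt (pre_norm2 K (comb_diff F F')) * sqrt (pre_norm2 K G')"
proof -
  let ?X = "tensor_comb F (comb_diff G G')" and ?Y = "tensor_comb (comb_diff F F') G'"
  note sym = tensor_kernel_commute[of K, OF assms(2)]
  note nonneg = psd_kernel_pre_norm2_nonneg[OF assms(1)]
  \<comment> \<open>\<open>F \<otimes> G - F' \<otimes> G' = F \<otimes> (G - G') + (F - F') \<otimes> G'\<close>\<close>
  have "pre_norm2 (tensor_kernel K) (comb_diff (tensor_comb F G) (tensor_comb F' G'))
      = pre_norm2 (tensor_kernel K) (?X @ ?Y)"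
    using pre_inner_commute[of K, OF assms(2)]
    by (simp add: pre_norm2_eq_pre_inner pre_inner_append_left pre_inner_append_right
        pre_inner_tensor_comb pre_inner_comb_diff_left pre_inner_comb_diff_right algebra_simps)
  also have "sqrt \<dots> \<le> sqrt (pre_norm2 (tensor_kernel K) ?X) + sqrt (pre_norm2 (tensor_kernel K) ?Y)"
  proof (rule sqrt_pre_norm2_append_le[OF sym])
    show "0 \<le> pre_norm2 (tensor_kernel K) ?X" "0 \<le> pre_norm2 (tensor_kernel K) ?Y"
      by (simp_all add: pre_norm2_tensor_comb nonneg)
    show "\<bar>pre_inner (tensor_kernel K) ?X ?Y\<bar>
        \<le> sqrt (pre_norm2 (tensor_kernel K) ?X) * sqrt (pre_norm2 (tensor_kernel K) ?Y)"
      using mult_mono[OF abs_pre_inner_le[OF assms, of F "comb_diff F F'"]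
          abs_pre_inner_le[OF assms, of "comb_diff G G'" G']]
      by (simp add: pre_inner_tensor_comb pre_norm2_tensor_comb real_sqrt_mult abs_mult nonneg
          ac_simps)
  qed
  finally show ?thesis
    by (simp add: pre_norm2_tensor_comb real_sqrt_mult)
qed

lemma H0_cauchy_tensor_comb:
  assumes "psd_kernel K" "\<And>x y. K x y = K y x" "H0_cauchy K F" "H0_cauchy K G"
  shows "H0_cauchy (tensor_kernel K) (\<lambda>n. tensor_comb (F n) (G n))"
  unfolding H0_cauchy_iff_sqrt
proof (intro allI impI)
  fix e :: real
  assume "0 < e"
  obtain MF MG where "0 < MF" "\<And>n. sqrt (pre_norm2 K (F n)) \<le> MF"
    and "0 < MG" "\<And>n. sqrt (pre_norm2 K (G n)) \<le> MG"
    using H0_cauchy_norm_bounded[OF assms(1-3)] H0_cauchy_norm_bounded[OF assms(1,2,4)] by metis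
  then obtain M where M: "0 < M" "\<And>n. sqrt (pre_norm2 K (F n)) \<le> M"
      "\<And>n. sqrt (pre_norm2 K (G n)) \<le> M"
    by (metis max.strict_coboundedI1 max.cobounded1 max.cobounded2 order.trans)
  then obtain NF NG
    where NF: "\<forall>m\<ge>NF. \<forall>n\<ge>NF. sqrt (pre_norm2 K (comb_diff (F m) (F n))) < e / (2 * M)"
      and NG: "\<forall>m\<ge>NG. \<forall>n\<ge>NG. sqrt (pre_norm2 K (comb_diff (G m) (G n))) < e / (2 * M)"
    using assms(3,4) \<open>0 < e\<close> unfolding H0_cauchy_iff_sqrt
    by (meson divide_pos_pos mult_pos_pos zero_less_numeral)
  show "\<exists>N. \<forall>m\<ge>N. \<forall>n\<ge>N. sqrt (pre_norm2 (tensor_kernel K)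
      (comb_diff (tensor_comb (F m) (G m)) (tensor_comb (F n) (G n)))) < e"
  proof (intro exI allI impI)
    fix m n
    assume "max NF NG \<le> m" "max NF NG \<le> n"
    note nonneg = psd_kernel_pre_norm2_nonneg[OF assms(1)]
    have "sqrt (pre_norm2 (tensor_kernel K)
        (comb_diff (tensor_comb (F m) (G m)) (tensor_comb (F n) (G n))))
      \<le> M * sqrt (pre_norm2 K (comb_diff (G m) (G n)))
        + sqrt (pre_norm2 K (comb_diff (F m) (F n))) * M"
      using sqrt_pre_norm2_tensor_comb_diff_le[OF assms(1,2)] M nonneg
      by (smt (verit) mult_left_mono mult_right_mono real_sqrt_ge_zero)
    also have "\<dots> < M * (e / (2 * M)) + e / (2 * M) * M"
      using NF NG \<open>max NF NG \<le> m\<close> \<open>max NF NG \<le> n\<close> \<open>0 < M\<close>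
      by (intro add_strict_mono mult_strict_left_mono mult_strict_right_mono) auto
    also have "\<dots> = e"
      using \<open>0 < M\<close> by simp
    finally show "sqrt (pre_norm2 (tensor_kernel K)
        (comb_diff (tensor_comb (F m) (G m)) (tensor_comb (F n) (G n)))) < e" .
  qed
qed

section \<open>Gaussian kernels\<close>

definition gauss_weight :: "real \<Rightarrow> real^'d \<Rightarrow> real^'d \<Rightarrow> real" where
  "gauss_weight \<sigma> x y = exp (- (norm (x - y))\<^sup>2 / (4 * \<sigma>\<^sup>2))"

definition gauss_diag :: "real \<Rightarrow> (real \<times> ((real^'d) \<times> (real^'d))) list \<Rightarrow> (real \<times> (real^'d)) list" where
  "gauss_diag \<sigma> T = map (\<lambda>(c, x, y). (c * gauss_weight \<sigma> x y, midpoint x y)) T"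

lemma gauss_kernel_commute: "gauss_kernel \<sigma> x y = gauss_kernel \<sigma> y x"
  by (simp add: gauss_kernel_def norm_minus_commute)

lemma inner_divide_eq_feature_kernel:
  fixes x y :: "real^'d"
  shows "inner x y / c\<^sup>2 = feature_kernel UNIV (\<lambda>i v. v $ i / c) x y"
  by (simp add: inner_vec_def feature_kernel_def sum_divide_distrib power2_eq_square)

lemma gauss_kernel_factor:
  "gauss_kernel \<sigma> x y = exp (- (norm x)\<^sup>2 / (2 * \<sigma>\<^sup>2)) * exp (- (norm y)\<^sup>2 / (2 * \<sigma>\<^sup>2))
    * exp (feature_kernel UNIV (\<lambda>i v. v $ i / \<sigma>) x y)"
proof -
  have "(norm (x - y))\<^sup>2 = (norm x)\<^sup>2 + (norm y)\<^sup>2 - 2 * inner x y"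
    by (simp add: power2_norm_eq_inner inner_commute algebra_simps)
  then have "- (norm (x - y))\<^sup>2 / (2 * \<sigma>\<^sup>2)
      = - (norm x)\<^sup>2 / (2 * \<sigma>\<^sup>2) + - (norm y)\<^sup>2 / (2 * \<sigma>\<^sup>2) + inner x y / \<sigma>\<^sup>2"
    by (simp add: diff_divide_distrib add_divide_distrib)
  then show ?thesis
    by (simp add: gauss_kernel_def inner_divide_eq_feature_kernel flip: exp_add)
qed

lemma psd_kernel_gauss_kernel: "psd_kernel (gauss_kernel \<sigma>)"
  unfolding gauss_kernel_factor
  by (intro psd_kernel_rescale psd_kernel_mult_exp_feature_kernel[where K = "\<lambda>x y. 1", simplified]
      psd_kernel_const_one) simp

lemma gauss_kernel_mult:
  fixes x x' y y' :: "real^'d"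
  shows "gauss_kernel \<sigma> x x' * gauss_kernel \<sigma> y y'
    = gauss_weight \<sigma> x y * gauss_weight \<sigma> x' y'
      * gauss_kernel (\<sigma> / sqrt 2) (midpoint x y) (midpoint x' y')
      * exp (inner (x - y) (x' - y') / (2 * \<sigma>\<^sup>2))"
proof (cases "\<sigma> = 0")
  case True
  then show ?thesis
    by (simp add: gauss_kernel_def gauss_weight_def)
next
  case False
  have "(norm (x - y))\<^sup>2 = 2 * (norm (x - x'))\<^sup>2 + 2 * (norm (y - y'))\<^sup>2 - (norm (x' - y'))\<^sup>2
      - 4 * (norm (midpoint x y - midpoint x' y'))\<^sup>2 + 2 * inner (x - y) (x' - y')"
    by (simp add: midpoint_def power2_norm_eq_inner inner_commute algebra_simps)
  moreover have "(\<sigma> / sqrt 2)\<^sup>2 = \<sigma>\<^sup>2 / 2"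
    by (simp add: power_divide)
  ultimately have "- (norm (x - x'))\<^sup>2 / (2 * \<sigma>\<^sup>2) + - (norm (y - y'))\<^sup>2 / (2 * \<sigma>\<^sup>2)
      = - (norm (x - y))\<^sup>2 / (4 * \<sigma>\<^sup>2) + - (norm (x' - y'))\<^sup>2 / (4 * \<sigma>\<^sup>2)
        + - (norm (midpoint x y - midpoint x' y'))\<^sup>2 / (2 * (\<sigma> / sqrt 2)\<^sup>2)
        + inner (x - y) (x' - y') / (2 * \<sigma>\<^sup>2)"
    using False by (simp only:) (simp add: field_simps eval_nat_numeral)
  then show ?thesis
    by (simp add: gauss_kernel_def gauss_weight_def flip: exp_add)
qed

lemma gauss_kernel_mult_same_point:
  fixes x y z :: "real^'d"
  shows "gauss_kernel \<sigma> z x * gauss_kernel \<sigma> z y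
    = gauss_weight \<sigma> x y * gauss_kernel (\<sigma> / sqrt 2) z (midpoint x y)"
  using gauss_kernel_mult[of \<sigma> x z y z]
  by (simp add: gauss_kernel_commute gauss_weight_def)

lemma kfun_gauss_diag:
  "kfun (gauss_kernel (\<sigma> / sqrt 2)) (gauss_diag \<sigma> T) z
    = kfun (tensor_kernel (gauss_kernel \<sigma>)) T (z, z)"
  by (simp add: kfun_def gauss_diag_def tensor_kernel_def gauss_kernel_mult_same_point
      case_prod_unfold comp_def ac_simps)

lemma gauss_diag_comb_diff:
  "comb_diff (gauss_diag \<sigma> T) (gauss_diag \<sigma> T') = gauss_diag \<sigma> (comb_diff T T')"
  by (simp add: comb_diff_def gauss_diag_def case_prod_unfold)

lemma pre_norm2_gauss_diag_le:
  fixes T :: "(real \<times> ((real^'d) \<times> (real^'d))) list"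
  shows "pre_norm2 (gauss_kernel (\<sigma> / sqrt 2)) (gauss_diag \<sigma> T)
    \<le> pre_norm2 (tensor_kernel (gauss_kernel \<sigma>)) T"
proof -
  define Kw where "Kw s t = gauss_weight \<sigma> (fst s) (snd s) * gauss_weight \<sigma> (fst t) (snd t)
      * gauss_kernel (\<sigma> / sqrt 2) (midpoint (fst s) (snd s)) (midpoint (fst t) (snd t))"
    for s t :: "(real^'d) \<times> (real^'d)"
  have "psd_kernel Kw"
    unfolding Kw_def
    by (intro psd_kernel_rescale psd_kernel_comp[where m = "\<lambda>s. midpoint (fst s) (snd s)"]
        psd_kernel_gauss_kernel)
  then have "psd_kernel (\<lambda>s t. Kw s t * (exp (feature_kernel UNIV
      (\<lambda>i s. (fst s - snd s) $ i / (sqrt 2 * \<sigma>)) s t) - 1))"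
    by (rule psd_kernel_mult_exp_feature_kernel_minus_one) simp
  moreover have "Kw s t * (exp (feature_kernel UNIV
      (\<lambda>i s. (fst s - snd s) $ i / (sqrt 2 * \<sigma>)) s t) - 1)
      = tensor_kernel (gauss_kernel \<sigma>) s t - Kw s t" for s t
    using inner_divide_eq_feature_kernel[of "fst s - snd s" "fst t - snd t" "sqrt 2 * \<sigma>"]
    by (simp add: Kw_def tensor_kernel_def gauss_kernel_mult[of \<sigma> "fst s"] feature_kernel_def
        algebra_simps)
  ultimately have "0 \<le> pre_norm2 (\<lambda>s t. tensor_kernel (gauss_kernel \<sigma>) s t - Kw s t) T"
    by (simp add: psd_kernel_pre_norm2_nonneg)
  moreover have "pre_norm2 Kw T = pre_norm2 (gauss_kernel (\<sigma> / sqrt 2)) (gauss_diag \<sigma> T)"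
    by (simp add: pre_norm2_def gauss_diag_def Kw_def case_prod_unfold comp_def ac_simps)
  ultimately show ?thesis
    by (simp add: pre_norm2_kernel_diff)
qed

lemma H0_cauchy_gauss_diag:
  assumes "H0_cauchy (tensor_kernel (gauss_kernel \<sigma>)) T"
  shows "H0_cauchy (gauss_kernel (\<sigma> / sqrt 2)) (\<lambda>n. gauss_diag \<sigma> (T n))"
  using assms unfolding H0_cauchy_def gauss_diag_comb_diff
  by (meson order.strict_trans1 pre_norm2_gauss_diag_le)

section \<open>Norms of products in the reproducing kernel Hilbert space\<close>

definition rkhs_norm_candidates :: "('a \<Rightarrow> 'a \<Rightarrow> real) \<Rightarrow> ('a \<Rightarrow> real) \<Rightarrow> real set" where
  "rkhs_norm_candidates K h = {L. \<exists>F. H0_cauchy K F \<and> (\<forall>z. (\<lambda>n. kfun K (F n) z) \<longlonglongrightarrow> h z)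
                                  \<and> (\<lambda>n. sqrt (pre_norm2 K (F n))) \<longlonglongrightarrow> L}"

lemma rkhs_norm_eq_Inf_candidates: "rkhs_norm K h = Inf (rkhs_norm_candidates K h)"
  by (simp add: rkhs_norm_def rkhs_norm_candidates_def)

lemma in_rkhs_iff_candidates_nonempty:
  assumes "psd_kernel K" "\<And>x y. K x y = K y x"
  shows "in_rkhs K h \<longleftrightarrow> rkhs_norm_candidates K h \<noteq> {}"
  using H0_cauchy_norm_convergent[OF assms]
  unfolding in_rkhs_def rkhs_norm_candidates_def convergent_def by blast

lemma rkhs_norm_candidates_nonneg:
  assumes "psd_kernel K" "L \<in> rkhs_norm_candidates K h"
  shows "0 \<le> L"
proof -
  obtain F where "(\<lambda>n. sqrt (pre_norm2 K (F n))) \<longlonglongrightarrow> L"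
    using assms(2) unfolding rkhs_norm_candidates_def by blast
  then show ?thesis
    by (rule LIMSEQ_le_const) (simp add: psd_kernel_pre_norm2_nonneg[OF assms(1)])
qed

lemma gauss_product_candidate:
  assumes "Lf \<in> rkhs_norm_candidates (gauss_kernel \<sigma>) f"
    and "Lg \<in> rkhs_norm_candidates (gauss_kernel \<sigma>) g"
  shows "\<exists>L \<in> rkhs_norm_candidates (gauss_kernel (\<sigma> / sqrt 2)) (\<lambda>x. f x * g x). L \<le> Lf * Lg"
proof -
  let ?k = "gauss_kernel \<sigma>" and ?k' = "gauss_kernel (\<sigma> / sqrt 2)"
  obtain F where F: "H0_cauchy ?k F" "\<And>z. (\<lambda>n. kfun ?k (F n) z) \<longlonglongrightarrow> f z"
      "(\<lambda>n. sqrt (pre_norm2 ?k (F n))) \<longlonglongrightarrow> Lf"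
    using assms(1) unfolding rkhs_norm_candidates_def by blast
  obtain G where G: "H0_cauchy ?k G" "\<And>z. (\<lambda>n. kfun ?k (G n) z) \<longlonglongrightarrow> g z"
      "(\<lambda>n. sqrt (pre_norm2 ?k (G n))) \<longlonglongrightarrow> Lg"
    using assms(2) unfolding rkhs_norm_candidates_def by blast
  define H where "H n = gauss_diag \<sigma> (tensor_comb (F n) (G n))" for n
  have cauchy: "H0_cauchy ?k' H"
    unfolding H_def
    by (intro H0_cauchy_gauss_diag H0_cauchy_tensor_comb psd_kernel_gauss_kernel F(1) G(1)
        gauss_kernel_commute)
  have "(\<lambda>n. kfun ?k' (H n) z) \<longlonglongrightarrow> f z * g z" for z
    unfolding H_def kfun_gauss_diag kfun_tensor_comb by (intro tendsto_mult F(2) G(2))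
  moreover obtain L where L: "(\<lambda>n. sqrt (pre_norm2 ?k' (H n))) \<longlonglongrightarrow> L"
    using H0_cauchy_norm_convergent[OF psd_kernel_gauss_kernel gauss_kernel_commute cauchy]
    unfolding convergent_def by blast
  moreover have "L \<le> Lf * Lg"
  proof (rule LIMSEQ_le[OF L tendsto_mult[OF F(3) G(3)]])
    show "\<exists>N. \<forall>n\<ge>N. sqrt (pre_norm2 ?k' (H n))
        \<le> sqrt (pre_norm2 ?k (F n)) * sqrt (pre_norm2 ?k (G n))"
    proof (intro exI allI impI)
      fix n
      show "sqrt (pre_norm2 ?k' (H n)) \<le> sqrt (pre_norm2 ?k (F n)) * sqrt (pre_norm2 ?k (G n))"
        using pre_norm2_gauss_diag_le[of \<sigma> "tensor_comb (F n) (G n)"]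
        by (simp add: H_def pre_norm2_tensor_comb flip: real_sqrt_mult)
    qed
  qed
  ultimately show ?thesis
    using cauchy unfolding rkhs_norm_candidates_def by blast
qed

lemma le_cInf_mult:
  fixes S :: "real set"
  assumes "S \<noteq> {}" "0 \<le> c" "\<And>x. x \<in> S \<Longrightarrow> r \<le> x * c"
  shows "r \<le> Inf S * c"
proof (cases "c = 0")
  case True
  then show ?thesis
    using assms(1,3) by fastforce
next
  case False
  then have "r / c \<le> Inf S"
    using assms by (intro cInf_greatest) (simp_all add: divide_le_eq)
  then show ?thesis
    using False assms(2) by (simp add: divide_le_eq)
qed

lemma cInf_le_cInf_mult:
  fixes A B C :: "real set"
  assumes "A \<noteq> {}" "B \<noteq> {}" "\<And>x. x \<in> A \<Longrightarrow> 0 \<le> x" "\<And>y. y \<in> B \<Longrightarrow> 0 \<le> y"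
    and "bdd_below C" "\<And>x y. x \<in> A \<Longrightarrow> y \<in> B \<Longrightarrow> \<exists>z \<in> C. z \<le> x * y"
  shows "Inf C \<le> Inf A * Inf B"
proof -
  have "Inf C \<le> x * y" if xy: "x \<in> A" "y \<in> B" for x y
  proof -
    obtain z where "z \<in> C" "z \<le> x * y"
      using assms(6)[OF xy] by blast
    then show ?thesis
      using cInf_lower[OF _ assms(5)] by (meson order.trans)
  qed
  then have "Inf C \<le> Inf A * y" if "y \<in> B" for y
    using assms(1,4) that by (intro le_cInf_mult) auto
  then have "Inf C \<le> Inf B * Inf A"
    using assms(1-3) by (intro le_cInf_mult cInf_greatest) (auto simp: mult.commute)
  then show ?thesis
    by (simp add: mult.commute)
qed

theorem theorem2:
  fixes \<sigma> :: real and f g :: "real^'d \<Rightarrow> real"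
  assumes "\<sigma> > 0"
    and "in_rkhs (gauss_kernel \<sigma>) f" and "in_rkhs (gauss_kernel \<sigma>) g"
  shows "in_rkhs (gauss_kernel (\<sigma> / sqrt 2)) (\<lambda>x. f x * g x)
    \<and> rkhs_norm (gauss_kernel (\<sigma> / sqrt 2)) (\<lambda>x. f x * g x)
        \<le> rkhs_norm (gauss_kernel \<sigma>) f * rkhs_norm (gauss_kernel \<sigma>) g"
proof -
  let ?k = "gauss_kernel \<sigma>" and ?k' = "gauss_kernel (\<sigma> / sqrt 2)"
  let ?Cf = "rkhs_norm_candidates ?k f" and ?Cg = "rkhs_norm_candidates ?k g"
    and ?Cfg = "rkhs_norm_candidates ?k' (\<lambda>x. f x * g x)"
  note in_rkhs_iff =
    in_rkhs_iff_candidates_nonempty[OF psd_kernel_gauss_kernel gauss_kernel_commute]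
  have "?Cf \<noteq> {}" "?Cg \<noteq> {}"
    using assms(2,3) by (simp_all add: in_rkhs_iff)
  then have "?Cfg \<noteq> {}"
    using gauss_product_candidate by blast
  moreover have "Inf ?Cfg \<le> Inf ?Cf * Inf ?Cg"
  proof (rule cInf_le_cInf_mult)
    show "bdd_below ?Cfg"
      by (meson bdd_belowI rkhs_norm_candidates_nonneg psd_kernel_gauss_kernel)
  qed (use \<open>?Cf \<noteq> {}\<close> \<open>?Cg \<noteq> {}\<close> gauss_product_candidate
      rkhs_norm_candidates_nonneg[OF psd_kernel_gauss_kernel] in blast)+
  ultimately show ?thesis
    by (simp add: in_rkhs_iff rkhs_norm_eq_Inf_candidates)
qed

end
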